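(* In the multi-parameter setting described in the context, suppose $p_j(\theta)>0$ for all $j$ and all $\theta$. Then $H(\theta)=C_\Upsilon(\theta)$ holds if and only if the channel is quasi-classical, i.e. the eigenvectors $|w_k\rangle$ of the output state do not depend on $\theta$.
   Context: A multi-parameter quantum channel on density matrices on $\mathbb{C}^d$ is $\rho_0\mapsto\sum_kE_k(\theta)\rho_0E_k(\theta)^\dagger$ with $\theta\in\mathbb{R}^m$, Kraus operators differentiable in $\theta$, $\sum_kE_k^\dagger E_k=I$. The input is a fixed pure state $\rho_0=|\psi_0\rangle\langle\psi_0|$. Canonical Kraus operators $\{\Upsilon_k(\theta)\}_{k=1}^d$: a differentiable Kraus representation of the same channel with $\mathrm{tr}\{\Upsilon_k\rho_0\Upsilon_j^\dagger\}=\delta_{jk}p_k(\theta)$; the output is $\rho_{out}(\theta)=\sum_kp_k|w_k\rangle\langle w_k|$ with $|w_k\rangle=p_k^{-1/2}\Upsilon_k|\psi_0\rangle$ an orthonormal basis differentiable in $\theta$. Write $X^{(j)}=\partial X/\partial\theta^j$. $C_\Upsilon(\theta)_{jk}=4\sum_l\mathrm{Re}\,\mathrm{tr}\{\Upsilon_l^{(j)}\rho_0\Upsilon_l^{(k)\dagger}\}$; $H(\theta)_{jk}=\mathrm{Re}\,\mathrm{tr}\{\lambda^{(j)}\rho_{out}\lambda^{(k)}\}$ is the SLD quantum information matrix, with $\lambda^{(j)}$ a self-adjoint solution of $\partial\rho_{out}/\partial\theta^j=\frac12(\rho_{out}\lambda^{(j)}+\lambda^{(j)}\rho_{out})$. 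*)

theory Defs
  imports "HOL-Analysis.Analysis"
begin

text \<open>Complex d x d matrices are modelled as complex^'d^'d (d = CARD('d));
 parameters theta range over real^'m (m = CARD('m)).\<close>

definition adjoint :: "complex^'d^'d \<Rightarrow> complex^'d^'d" where
  "adjoint A = (\<chi> i j. cnj (A $ j $ i))"

definition ketbra :: "complex^'d \<Rightarrow> complex^'d \<Rightarrow> complex^'d^'d" where
  "ketbra u v = (\<chi> i j. u $ i * cnj (v $ j))"

definition pderiv_param :: "(real^'m \<Rightarrow> 'b::real_normed_vector) \<Rightarrow> 'm \<Rightarrow> real^'m \<Rightarrow> 'b" where
  "pderiv_param f j \<theta> = frechet_derivative f (at \<theta>) (axis j 1)"

definition kraus_apply :: "('k::finite \<Rightarrow> complex^'d^'d) \<Rightarrow> complex^'d^'d \<Rightarrow> complex^'d^'d" where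
  "kraus_apply E \<rho> = (\<Sum>k\<in>UNIV. E k ** \<rho> ** adjoint (E k))"

definition C_Ups :: "('l::finite \<Rightarrow> real^'m \<Rightarrow> complex^'d^'d) \<Rightarrow> complex^'d^'d \<Rightarrow> real^'m \<Rightarrow> real^'m^'m" where
  "C_Ups Ups \<rho>0 \<theta> = (\<chi> j k. 4 * (\<Sum>l\<in>UNIV.
      Re (trace (pderiv_param (Ups l) j \<theta> ** \<rho>0 ** adjoint (pderiv_param (Ups l) k \<theta>)))))"

definition H_SLD :: "('m \<Rightarrow> real^'m \<Rightarrow> complex^'d^'d) \<Rightarrow> (real^'m \<Rightarrow> complex^'d^'d) \<Rightarrow> real^'m \<Rightarrow> real^'m^'m" where
  "H_SLD lam \<rho>out \<theta> = (\<chi> j k. Re (trace (lam j \<theta> ** \<rho>out \<theta> ** lam k \<theta>)))"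

end

theory Submission
  imports Defs
begin

(* Put u_l = Upsilon_l psi0 = sqrt(p_l) w_l, so that rho_out = sum_l |u_l><u_l| with the u_l
   orthogonal, and let a_lj be the partial derivatives of u_l. The defects e_lj = 2 a_lj - lambda_j u_l
   satisfy sum_l |u_l><e_lj| + |e_lj><u_l| = 0 by the SLD equation; this kills the cross terms in
   C_Upsilon - H, leaving the Gram matrix Re sum_l <e_lj, e_lk>. Hence H = C_Upsilon iff every
   lambda_j u_l = 2 a_lj. Since the u_l form an orthogonal basis, this holds iff each a_lj is a real
   multiple of u_l: in one direction read the SLD equation in the eigenbasis, in the other
   differentiate <u_m, u_l> = 0 and use that lambda_j is self-adjoint. Finally, the derivatives of a
   nonvanishing curve are real multiples of it exactly when its direction u_l/|u_l| = w_l is constant. *)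

section \<open>A Hermitian inner product on complex vectors\<close>

definition cinner :: "complex^'n \<Rightarrow> complex^'n \<Rightarrow> complex" where
  "cinner x y = (\<Sum>i\<in>UNIV. x $ i * cnj (y $ i))"

interpretation cinner: bounded_bilinear "cinner :: complex^'n \<Rightarrow> _"
  unfolding bilinear_conv_bounded_bilinear[symmetric] bilinear_def cinner_def
  by (auto intro!: linearI simp: sum.distrib sum_distrib_left algebra_simps
      scaleR_conv_of_real[where 'a = complex])

lemma cnj_cinner: "cnj (cinner x y) = cinner y x"
  by (simp add: cinner_def mult.commute)

lemma Re_cinner: "Re (cinner x y) = x \<bullet> y"
  by (simp add: cinner_def inner_vec_def inner_complex_def Re_sum)

lemma cinner_self: "cinner x x = of_real ((norm x)\<^sup>2)"
proof -
  have "Im (cinner x x) = 0"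
    by (simp add: cinner_def)
  then show ?thesis
    by (simp add: complex_eq_iff Re_cinner power2_norm_eq_inner)
qed

lemma cinner_self_eq_0_iff [simp]: "cinner x x = 0 \<longleftrightarrow> x = 0"
  by (simp add: cinner_self)

lemma cinner_adjoint: "cinner (A *v x) y = cinner x (adjoint A *v y)"
  unfolding cinner_def adjoint_def matrix_vector_mult_def
  by (simp add: sum_distrib_left sum_distrib_right mult_ac) (rule sum.swap)

interpretation ketbra: bounded_bilinear "ketbra :: complex^'n \<Rightarrow> _"
  unfolding bilinear_conv_bounded_bilinear[symmetric] bilinear_def ketbra_def
  by (auto intro!: linearI simp: vec_eq_iff algebra_simps scaleR_conv_of_real[where 'a = complex])

interpretation matrix_mult: bounded_bilinear "(**) :: complex^'n^'m \<Rightarrow> complex^'p^'n \<Rightarrow> _"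
  unfolding bilinear_conv_bounded_bilinear[symmetric] bilinear_def matrix_matrix_mult_def
  by (auto intro!: linearI simp: vec_eq_iff algebra_simps sum.distrib sum_distrib_left
      scaleR_conv_of_real[where 'a = complex])

interpretation matrix_vector_mult: bounded_bilinear "(*v) :: complex^'n^'m \<Rightarrow> complex^'n \<Rightarrow> _"
  unfolding bilinear_conv_bounded_bilinear[symmetric] bilinear_def matrix_vector_mult_def
  by (auto intro!: linearI simp: vec_eq_iff algebra_simps sum.distrib sum_distrib_left
      scaleR_conv_of_real[where 'a = complex])

lemma of_real_vector_scale: "(of_real r :: complex) *s x = r *\<^sub>R x"
  by (simp add: vec_eq_iff scaleR_conv_of_real[where 'a = complex])

lemma trace_sum: "trace (\<Sum>i\<in>I. A i) = (\<Sum>i\<in>I. trace (A i :: 'a::semiring_1^'n^'n))"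
  unfolding trace_def sum_component by (rule sum.swap)

lemma ketbra_apply: "ketbra x y *v z = cinner z y *s x"
  unfolding ketbra_def cinner_def matrix_vector_mult_def
  by (simp add: vec_eq_iff sum_distrib_left mult_ac)

lemma trace_ketbra: "trace (ketbra x y) = cinner x y"
  by (simp add: trace_def ketbra_def cinner_def)

lemma matrix_mult_ketbra: "A ** ketbra x y = ketbra (A *v x) y"
  unfolding ketbra_def matrix_matrix_mult_def matrix_vector_mult_def
  by (simp add: vec_eq_iff sum_distrib_left sum_distrib_right mult_ac)

lemma ketbra_matrix_mult: "ketbra x y ** B = ketbra x (adjoint B *v y)"
  unfolding ketbra_def matrix_matrix_mult_def matrix_vector_mult_def adjoint_def
  by (simp add: vec_eq_iff sum_distrib_left mult_ac)

lemma adjoint_adjoint [simp]: "adjoint (adjoint A) = A"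
  by (simp add: adjoint_def vec_eq_iff)

lemma sandwich_ketbra: "A ** ketbra x y ** adjoint B = ketbra (A *v x) (B *v y)"
  by (simp add: matrix_mult_ketbra ketbra_matrix_mult)

section \<open>Orthogonal families of CARD('n) vectors\<close>

lemma orthogonal_family_cinner:
  assumes "\<And>m n. m \<noteq> n \<Longrightarrow> cinner (u m) (u n) = 0"
  shows "cinner (u m) (u n) = (if m = n then of_real ((norm (u m))\<^sup>2) else 0)"
  using assms by (simp add: cinner_self)

lemma orthogonal_family_eqI:
  fixes u :: "'n \<Rightarrow> complex^'n"
  assumes orth: "\<And>m n. m \<noteq> n \<Longrightarrow> cinner (u m) (u n) = 0" and nonzero: "\<And>m. u m \<noteq> 0"
    and eq: "\<And>m. cinner x (u m) = cinner y (u m)"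
  shows "x = y"
proof -
  define W :: "complex^'n^'n" where "W = (\<chi> m i. cnj (u m $ i))"
  define V :: "complex^'n^'n" where "V = (\<chi> i n. u n $ i / cinner (u n) (u n))"
  have "(W ** V) $ m $ n = cinner (u n) (u m) / cinner (u n) (u n)" for m n
    by (simp add: W_def V_def matrix_matrix_mult_def cinner_def sum_divide_distrib mult.commute)
  then have "W ** V = mat 1"
    using orth nonzero by (simp add: vec_eq_iff mat_def)
  then have left_inverse: "V ** W = mat 1"
    using matrix_left_right_inverse by blast
  have "W *v x = W *v y"
    using eq by (simp add: W_def matrix_vector_mult_def cinner_def vec_eq_iff mult.commute)
  then have "(V ** W) *v x = (V ** W) *v y"
    by (simp flip: matrix_vector_mul_assoc)
  then show ?thesis
    by (simp add: left_inverse)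
qed

lemma orthogonal_family_in_span:
  fixes u :: "'n \<Rightarrow> complex^'n"
  assumes orth: "\<And>m n. m \<noteq> n \<Longrightarrow> cinner (u m) (u n) = 0" and nonzero: "\<And>m. u m \<noteq> 0"
    and "\<And>m. m \<noteq> n \<Longrightarrow> cinner x (u m) = 0" and "Im (cinner x (u n)) = 0"
  shows "x \<in> span {u n}"
proof -
  have "x = (Re (cinner x (u n)) / (norm (u n))\<^sup>2) *\<^sub>R u n"
  proof (rule orthogonal_family_eqI[OF orth nonzero])
    fix m
    show "cinner x (u m) = cinner ((Re (cinner x (u n)) / (norm (u n))\<^sup>2) *\<^sub>R u n) (u m)"
      using assms nonzero[of n]
      by (cases "m = n") (simp_all add: cinner.scaleR_left cinner_self complex_eq_iff)
  qed
  then show ?thesis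
    by (metis span_base span_scale singletonI)
qed

section \<open>The SLD equation for a sum of rank-one projections\<close>

definition frame_operator :: "('l::finite \<Rightarrow> complex^'n) \<Rightarrow> complex^'n^'n" where
  "frame_operator u = (\<Sum>l\<in>UNIV. ketbra (u l) (u l))"

lemma trace_mult_frame_operator_mult:
  assumes "adjoint B = B"
  shows "trace (A ** frame_operator u ** B) = (\<Sum>l\<in>UNIV. cinner (A *v u l) (B *v u l))"
  by (simp add: frame_operator_def matrix_mult.sum_left matrix_mult.sum_right matrix_mult_ketbra
      ketbra_matrix_mult assms trace_sum trace_ketbra)

lemma adjoint_frame_operator: "adjoint (frame_operator u) = frame_operator u"
  by (simp add: frame_operator_def adjoint_def ketbra_def vec_eq_iff sum_component mult.commute)

lemma frame_operator_apply:
  fixes u :: "'l::finite \<Rightarrow> complex^'n"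
  assumes orth: "\<And>m n. m \<noteq> n \<Longrightarrow> cinner (u m) (u n) = 0"
  shows "frame_operator u *v u l = (norm (u l))\<^sup>2 *\<^sub>R u l"
proof -
  have "ketbra (u n) (u n) *v u l = (if n = l then (norm (u l))\<^sup>2 *\<^sub>R u l else 0)" for n
    using orth[of l n] by (auto simp: ketbra_apply cinner_self of_real_vector_scale simp del: of_real_power)
  then show ?thesis
    by (simp add: frame_operator_def matrix_vector_mult.sum_left)
qed

lemma sld_equation_iff_defect:
  fixes u a :: "'l::finite \<Rightarrow> complex^'n" and L :: "complex^'n^'n"
  assumes "adjoint L = L"
  shows "(\<Sum>l\<in>UNIV. ketbra (u l) (a l) + ketbra (a l) (u l))
           = (1/2) *\<^sub>R (frame_operator u ** L + L ** frame_operator u)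
    \<longleftrightarrow> (\<Sum>l\<in>UNIV. ketbra (u l) (2 *\<^sub>R a l - L *v u l) + ketbra (2 *\<^sub>R a l - L *v u l) (u l)) = 0"
proof -
  have defect: "(\<Sum>l\<in>UNIV. ketbra (u l) (2 *\<^sub>R a l - L *v u l) + ketbra (2 *\<^sub>R a l - L *v u l) (u l))
      = 2 *\<^sub>R (\<Sum>l\<in>UNIV. ketbra (u l) (a l) + ketbra (a l) (u l))
        - (frame_operator u ** L + L ** frame_operator u)"
    by (simp add: frame_operator_def ketbra.diff_left ketbra.diff_right ketbra.scaleR_left
        ketbra.scaleR_right matrix_mult.sum_left matrix_mult.sum_right ketbra_matrix_mult
        matrix_mult_ketbra assms sum.distrib sum_subtractf scaleR_sum_right algebra_simps)
  have "X = (1/2) *\<^sub>R Y \<longleftrightarrow> 2 *\<^sub>R X - Y = 0" for X Y :: "'a::real_vector"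
    by auto
  then show ?thesis
    unfolding defect .
qed

lemma sld_defect_orthogonal:
  fixes u e :: "'l::finite \<Rightarrow> complex^'n" and L :: "complex^'n^'n"
  assumes L: "adjoint L = L"
    and defect: "(\<Sum>l\<in>UNIV. ketbra (u l) (e l) + ketbra (e l) (u l)) = 0"
  shows "(\<Sum>l\<in>UNIV. e l \<bullet> (L *v u l)) = 0"
proof -
  have "(\<Sum>l\<in>UNIV. cinner (L *v u l) (e l) + cinner (L *v e l) (u l))
      = trace (L ** (\<Sum>l\<in>UNIV. ketbra (u l) (e l) + ketbra (e l) (u l)))"
    by (simp add: matrix_mult.sum_right matrix_mult.add_right matrix_mult_ketbra trace_sum
        trace_add trace_ketbra)
  also have "\<dots> = 0"
    by (simp add: defect trace_def)
  finally have "Re (\<Sum>l\<in>UNIV. cinner (L *v u l) (e l) + cinner (L *v e l) (u l)) = 0"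
    by simp
  moreover have "Re (cinner (L *v e l) (u l)) = e l \<bullet> (L *v u l)" for l
    using cinner_adjoint[of L "e l" "u l"] by (simp add: L Re_cinner)
  ultimately show ?thesis
    by (simp add: Re_cinner inner_commute flip: sum_distrib_left)
qed

lemma sld_defect_identity:
  fixes u aj ak :: "'l::finite \<Rightarrow> complex^'n" and Lj Lk :: "complex^'n^'n"
  assumes Lj: "adjoint Lj = Lj" and Lk: "adjoint Lk = Lk"
    and SLDj: "(\<Sum>l\<in>UNIV. ketbra (u l) (aj l) + ketbra (aj l) (u l))
                 = (1/2) *\<^sub>R (frame_operator u ** Lj + Lj ** frame_operator u)"
    and SLDk: "(\<Sum>l\<in>UNIV. ketbra (u l) (ak l) + ketbra (ak l) (u l))
                 = (1/2) *\<^sub>R (frame_operator u ** Lk + Lk ** frame_operator u)"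
  shows "4 * (\<Sum>l\<in>UNIV. aj l \<bullet> ak l) - Re (trace (Lj ** frame_operator u ** Lk))
       = (\<Sum>l\<in>UNIV. (2 *\<^sub>R aj l - Lj *v u l) \<bullet> (2 *\<^sub>R ak l - Lk *v u l))"
proof -
  define ej where "ej l = 2 *\<^sub>R aj l - Lj *v u l" for l
  define ek where "ek l = 2 *\<^sub>R ak l - Lk *v u l" for l
  have ej_Lk: "(\<Sum>l\<in>UNIV. ej l \<bullet> (Lk *v u l)) = 0"
    using Lk SLDj[unfolded sld_equation_iff_defect[OF Lj]] unfolding ej_def
    by (rule sld_defect_orthogonal)
  have ek_Lj: "(\<Sum>l\<in>UNIV. ek l \<bullet> (Lj *v u l)) = 0"
    using Lj SLDk[unfolded sld_equation_iff_defect[OF Lk]] unfolding ek_def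
    by (rule sld_defect_orthogonal)
  have "4 * (aj l \<bullet> ak l) = (ej l + Lj *v u l) \<bullet> (ek l + Lk *v u l)" for l
    by (simp add: ej_def ek_def)
  then have "4 * (\<Sum>l\<in>UNIV. aj l \<bullet> ak l) = (\<Sum>l\<in>UNIV. ej l \<bullet> ek l)
      + (\<Sum>l\<in>UNIV. ej l \<bullet> (Lk *v u l)) + (\<Sum>l\<in>UNIV. ek l \<bullet> (Lj *v u l))
      + (\<Sum>l\<in>UNIV. (Lj *v u l) \<bullet> (Lk *v u l))"
    by (simp add: sum_distrib_left inner_add_left inner_add_right inner_commute sum.distrib)
  moreover have "Re (trace (Lj ** frame_operator u ** Lk)) = (\<Sum>l\<in>UNIV. (Lj *v u l) \<bullet> (Lk *v u l))"
    by (simp add: trace_mult_frame_operator_mult Lk Re_cinner)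
  ultimately show ?thesis
    by (simp add: ej_Lk ek_Lj flip: ej_def ek_def)
qed

lemma sld_apply_eq_if_parallel:
  fixes u a :: "'n \<Rightarrow> complex^'n" and L :: "complex^'n^'n"
  assumes orth: "\<And>m n. m \<noteq> n \<Longrightarrow> cinner (u m) (u n) = 0" and nonzero: "\<And>m. u m \<noteq> 0"
    and parallel: "\<And>l. a l \<in> span {u l}"
    and SLD: "(\<Sum>l\<in>UNIV. ketbra (u l) (a l) + ketbra (a l) (u l))
                = (1/2) *\<^sub>R (frame_operator u ** L + L ** frame_operator u)"
  shows "L *v u l = 2 *\<^sub>R a l"
proof (rule orthogonal_family_eqI[OF orth nonzero])
  fix m
  define q where "q n = (norm (u n))\<^sup>2" for n
  have "\<forall>n. \<exists>c. a n = c *\<^sub>R u n"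
    using parallel by (auto simp: span_singleton)
  then obtain c where a: "\<And>n. a n = c n *\<^sub>R u n"
    by metis
  have cinner_u: "cinner (u n) (u k) = (if n = k then of_real (q n) else 0)" for n k
    unfolding q_def by (rule orthogonal_family_cinner[OF orth])
  have "(ketbra (u n) (a n) + ketbra (a n) (u n)) *v u l = (if n = l then (2 * q l) *\<^sub>R a l else 0)" for n
    using orth[of l n] by (auto simp: matrix_vector_mult_add_rdistrib ketbra_apply a
        cinner.scaleR_right cinner_self q_def vec_eq_iff scaleR_conv_of_real[where 'a = complex] algebra_simps)
  then have "(\<Sum>n\<in>UNIV. ketbra (u n) (a n) + ketbra (a n) (u n)) *v u l = (2 * q l) *\<^sub>R a l"
    by (simp add: matrix_vector_mult.sum_left)
  then have D: "cinner ((\<Sum>n\<in>UNIV. ketbra (u n) (a n) + ketbra (a n) (u n)) *v u l) (u m)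
      = of_real ((q m + q l) / 2) * cinner (2 *\<^sub>R a l) (u m)"
    by (auto simp: a cinner.scaleR_left cinner_u scaleR_conv_of_real[where 'a = complex])
  have "of_real ((q m + q l) / 2) * cinner (L *v u l) (u m)
      = cinner (((1/2) *\<^sub>R (frame_operator u ** L + L ** frame_operator u)) *v u l) (u m)"
    by (simp add: matrix_vector_mult.scaleR_left matrix_vector_mult_add_rdistrib
        flip: matrix_vector_mul_assoc
        add: cinner.scaleR_left cinner.add_left cinner_adjoint[of "frame_operator u"]
        adjoint_frame_operator frame_operator_apply[of u, OF orth] cinner.scaleR_right q_def
        matrix_vector_mult.scaleR_right scaleR_conv_of_real[where 'a = complex] algebra_simps)
  also have "\<dots> = of_real ((q m + q l) / 2) * cinner (2 *\<^sub>R a l) (u m)"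
    by (simp only: D flip: SLD)
  finally show "cinner (L *v u l) (u m) = cinner (2 *\<^sub>R a l) (u m)"
    using nonzero[of l] by (simp add: q_def add_nonneg_eq_0_iff del: of_real_divide of_real_add)
qed

section \<open>Curves of constant direction\<close>

lemma has_derivative_norm_comp:
  fixes f :: "'a::real_normed_vector \<Rightarrow> 'b::real_inner"
  assumes "(f has_derivative f') (at x)" and "f x \<noteq> 0"
  shows "((\<lambda>y. norm (f y)) has_derivative (\<lambda>h. f' h \<bullet> sgn (f x))) (at x)"
  using has_derivative_compose[OF assms(1) has_derivative_norm[OF assms(2)]] .

lemma sgn_constant_iff_derivative_in_span:
  fixes f :: "'a::real_normed_vector \<Rightarrow> 'b::real_inner"
  assumes deriv: "\<And>x. (f has_derivative f' x) (at x)" and nonzero: "\<And>x. f x \<noteq> 0"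
  shows "(\<exists>v. \<forall>x. sgn (f x) = v) \<longleftrightarrow> (\<forall>x h. f' x h \<in> span {f x})"
proof
  assume "\<exists>v. \<forall>x. sgn (f x) = v"
  then obtain v where v: "\<And>x. sgn (f x) = v" by blast
  show "\<forall>x h. f' x h \<in> span {f x}"
  proof (intro allI)
    fix x h
    have "f = (\<lambda>y. norm (f y) *\<^sub>R v)"
    proof
      fix y
      show "f y = norm (f y) *\<^sub>R v"
        using v[of y] nonzero[of y] by (auto simp: sgn_div_norm)
    qed
    then have "(f has_derivative (\<lambda>h. (f' x h \<bullet> sgn (f x)) *\<^sub>R v)) (at x)"
      using has_derivative_scaleR_left[OF has_derivative_norm_comp[OF deriv nonzero]] by metis
    then have "f' x h = (f' x h \<bullet> sgn (f x)) *\<^sub>R sgn (f x)"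
      using has_derivative_unique[OF deriv] v by metis
    then show "f' x h \<in> span {f x}"
      by (metis sgn_div_norm span_base span_scale singletonI)
  qed
next
  assume span: "\<forall>x h. f' x h \<in> span {f x}"
  have "(sgn \<circ> f has_derivative (\<lambda>h. 0)) (at x)" for x
  proof -
    have "((\<lambda>y. inverse (norm (f y)) *\<^sub>R f y) has_derivative
        (\<lambda>h. inverse (norm (f x)) *\<^sub>R f' x h
           - (inverse (norm (f x)) * (f' x h \<bullet> sgn (f x)) * inverse (norm (f x))) *\<^sub>R f x)) (at x)"
      using nonzero[of x] by (auto intro!: derivative_eq_intros has_derivative_norm_comp deriv)
    moreover have "inverse (norm (f x)) *\<^sub>R f' x h
           - (inverse (norm (f x)) * (f' x h \<bullet> sgn (f x)) * inverse (norm (f x))) *\<^sub>R f x = 0" for h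
    proof -
      obtain c where "f' x h = c *\<^sub>R f x" using span by (auto simp: span_singleton)
      then show ?thesis
        using nonzero[of x] by (simp add: sgn_div_norm power2_norm_eq_inner[symmetric] power2_eq_square)
    qed
    ultimately show ?thesis by (simp add: o_def sgn_div_norm divide_inverse_commute)
  qed
  then show "\<exists>v. \<forall>x. sgn (f x) = v"
    using has_derivative_zero_constant[of UNIV "sgn \<circ> f"] by auto
qed

lemma linear_in_span_if_axis_in_span:
  fixes f :: "real^'m \<Rightarrow> 'b::real_vector"
  assumes "linear f" and "\<And>j. f (axis j 1) \<in> span B"
  shows "f h \<in> span B"
proof -
  have "f h = (\<Sum>j\<in>UNIV. h $ j *\<^sub>R f (axis j 1))"
    using linear_sum[OF assms(1), of "\<lambda>j. h $ j *\<^sub>R axis j 1" UNIV] basis_expansion[of h]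
    by (simp add: scalar_mult_eq_scaleR linear_scale[OF assms(1)])
  then show ?thesis
    by (simp add: assms(2) span_sum span_scale)
qed

section \<open>Differentiable orthogonal decompositions of the output state\<close>

lemma pderiv_param_has_derivative: "(f has_derivative f') (at \<theta>) \<Longrightarrow> pderiv_param f j \<theta> = f' (axis j 1)"
  by (simp add: pderiv_param_def frechet_derivative_at[symmetric])

lemma pderiv_param_const: "pderiv_param (\<lambda>_. c) j \<theta> = 0"
  by (simp add: pderiv_param_has_derivative[OF has_derivative_const])

lemma pderiv_param_bounded_linear:
  assumes "bounded_linear g" and "f differentiable (at \<theta>)"
  shows "pderiv_param (\<lambda>\<theta>. g (f \<theta>)) j \<theta> = g (pderiv_param f j \<theta>)"
proof -
  have chain: "((\<lambda>\<theta>. g (f \<theta>)) has_derivative (\<lambda>h. g (frechet_derivative f (at \<theta>) h))) (at \<theta>)"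
    using bounded_linear.has_derivative[OF assms(1) assms(2)[unfolded frechet_derivative_works]] .
  show ?thesis
    using pderiv_param_has_derivative[OF chain] by (simp add: pderiv_param_def)
qed

locale canonical_output =
  fixes u :: "'n::finite \<Rightarrow> real^'m \<Rightarrow> complex^'n"
    and lam :: "'m \<Rightarrow> real^'m \<Rightarrow> complex^'n^'n"
  assumes u_differentiable: "\<And>l \<theta>. u l differentiable (at \<theta>)"
    and u_orthogonal: "\<And>l k \<theta>. l \<noteq> k \<Longrightarrow> cinner (u l \<theta>) (u k \<theta>) = 0"
    and u_nonzero: "\<And>l \<theta>. u l \<theta> \<noteq> 0"
    and lam_self_adjoint: "\<And>j \<theta>. adjoint (lam j \<theta>) = lam j \<theta>"
    and lam_SLD: "\<And>j \<theta>. pderiv_param (\<lambda>\<theta>. frame_operator (\<lambda>l. u l \<theta>)) j \<theta>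
      = (1/2) *\<^sub>R (frame_operator (\<lambda>l. u l \<theta>) ** lam j \<theta> + lam j \<theta> ** frame_operator (\<lambda>l. u l \<theta>))"
begin

lemma u_has_derivative: "(u l has_derivative frechet_derivative (u l) (at \<theta>)) (at \<theta>)"
  using u_differentiable frechet_derivative_works by blast

lemma sld_equation:
  "(\<Sum>l\<in>UNIV. ketbra (u l \<theta>) (pderiv_param (u l) j \<theta>) + ketbra (pderiv_param (u l) j \<theta>) (u l \<theta>))
    = (1/2) *\<^sub>R (frame_operator (\<lambda>l. u l \<theta>) ** lam j \<theta> + lam j \<theta> ** frame_operator (\<lambda>l. u l \<theta>))"
proof -
  have deriv: "((\<lambda>\<theta>. frame_operator (\<lambda>l. u l \<theta>)) has_derivative
      (\<lambda>h. \<Sum>l\<in>UNIV. ketbra (u l \<theta>) (frechet_derivative (u l) (at \<theta>) h)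
                     + ketbra (frechet_derivative (u l) (at \<theta>) h) (u l \<theta>))) (at \<theta>)"
    unfolding frame_operator_def by (intro has_derivative_sum ketbra.FDERIV u_has_derivative)
  then show ?thesis
    using pderiv_param_has_derivative[OF deriv] lam_SLD by (simp add: pderiv_param_def)
qed

lemma information_defect:
  "4 * (\<Sum>l\<in>UNIV. pderiv_param (u l) j \<theta> \<bullet> pderiv_param (u l) k \<theta>)
     - H_SLD lam (\<lambda>\<theta>. frame_operator (\<lambda>l. u l \<theta>)) \<theta> $ j $ k
   = (\<Sum>l\<in>UNIV. (2 *\<^sub>R pderiv_param (u l) j \<theta> - lam j \<theta> *v u l \<theta>)
                 \<bullet> (2 *\<^sub>R pderiv_param (u l) k \<theta> - lam k \<theta> *v u l \<theta>))"
  unfolding H_SLD_def using lam_self_adjoint sld_equation by (simp add: sld_defect_identity)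

lemma information_eq_iff_sld_apply_eq:
  "(\<forall>\<theta>. H_SLD lam (\<lambda>\<theta>. frame_operator (\<lambda>l. u l \<theta>)) \<theta>
          = (\<chi> j k. 4 * (\<Sum>l\<in>UNIV. pderiv_param (u l) j \<theta> \<bullet> pderiv_param (u l) k \<theta>)))
   \<longleftrightarrow> (\<forall>l j \<theta>. lam j \<theta> *v u l \<theta> = 2 *\<^sub>R pderiv_param (u l) j \<theta>)"
proof
  assume H: "\<forall>\<theta>. H_SLD lam (\<lambda>\<theta>. frame_operator (\<lambda>l. u l \<theta>)) \<theta>
          = (\<chi> j k. 4 * (\<Sum>l\<in>UNIV. pderiv_param (u l) j \<theta> \<bullet> pderiv_param (u l) k \<theta>))"
  show "\<forall>l j \<theta>. lam j \<theta> *v u l \<theta> = 2 *\<^sub>R pderiv_param (u l) j \<theta>"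
  proof (intro allI)
    fix l j \<theta>
    have "(\<Sum>l\<in>UNIV. (2 *\<^sub>R pderiv_param (u l) j \<theta> - lam j \<theta> *v u l \<theta>)
                 \<bullet> (2 *\<^sub>R pderiv_param (u l) j \<theta> - lam j \<theta> *v u l \<theta>)) = 0"
      using information_defect[of j \<theta> j] H by simp
    then show "lam j \<theta> *v u l \<theta> = 2 *\<^sub>R pderiv_param (u l) j \<theta>"
      by (simp add: sum_nonneg_eq_0_iff)
  qed
next
  assume "\<forall>l j \<theta>. lam j \<theta> *v u l \<theta> = 2 *\<^sub>R pderiv_param (u l) j \<theta>"
  then have "H_SLD lam (\<lambda>\<theta>. frame_operator (\<lambda>l. u l \<theta>)) \<theta> $ j $ k
      = 4 * (\<Sum>l\<in>UNIV. pderiv_param (u l) j \<theta> \<bullet> pderiv_param (u l) k \<theta>)" for j k \<theta>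
    using information_defect[of j \<theta> k] by simp
  then show "\<forall>\<theta>. H_SLD lam (\<lambda>\<theta>. frame_operator (\<lambda>l. u l \<theta>)) \<theta>
          = (\<chi> j k. 4 * (\<Sum>l\<in>UNIV. pderiv_param (u l) j \<theta> \<bullet> pderiv_param (u l) k \<theta>))"
    by (simp add: vec_eq_iff)
qed

lemma pderiv_cinner_orthogonal:
  assumes "l \<noteq> k"
  shows "cinner (pderiv_param (u l) j \<theta>) (u k \<theta>) + cinner (u l \<theta>) (pderiv_param (u k) j \<theta>) = 0"
proof -
  have deriv: "((\<lambda>\<theta>. cinner (u l \<theta>) (u k \<theta>)) has_derivative
      (\<lambda>h. cinner (u l \<theta>) (frechet_derivative (u k) (at \<theta>) h)
         + cinner (frechet_derivative (u l) (at \<theta>) h) (u k \<theta>))) (at \<theta>)"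
    by (intro cinner.FDERIV u_has_derivative)
  then have "pderiv_param (\<lambda>\<theta>. cinner (u l \<theta>) (u k \<theta>)) j \<theta>
      = cinner (pderiv_param (u l) j \<theta>) (u k \<theta>) + cinner (u l \<theta>) (pderiv_param (u k) j \<theta>)"
    using pderiv_param_has_derivative[OF deriv] by (simp add: pderiv_param_def)
  moreover have "(\<lambda>\<theta>. cinner (u l \<theta>) (u k \<theta>)) = (\<lambda>_. 0)"
    using u_orthogonal[OF assms] by simp
  ultimately show ?thesis
    by (simp add: pderiv_param_const)
qed

lemma sld_apply_eq_iff_parallel:
  "(\<forall>l j \<theta>. lam j \<theta> *v u l \<theta> = 2 *\<^sub>R pderiv_param (u l) j \<theta>)
   \<longleftrightarrow> (\<forall>l j \<theta>. pderiv_param (u l) j \<theta> \<in> span {u l \<theta>})"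
proof
  assume sld: "\<forall>l j \<theta>. lam j \<theta> *v u l \<theta> = 2 *\<^sub>R pderiv_param (u l) j \<theta>"
  show "\<forall>l j \<theta>. pderiv_param (u l) j \<theta> \<in> span {u l \<theta>}"
  proof (intro allI)
    fix l j \<theta>
    let ?a = "\<lambda>l. pderiv_param (u l) j \<theta>" and ?L = "lam j \<theta>"
    have a: "?a n = (1/2) *\<^sub>R (?L *v u n \<theta>)" for n
      using sld by simp
    have "cinner (?a l) (u k \<theta>) = 0" if "k \<noteq> l" for k
    proof -
      have "cinner (?a k) (u l \<theta>) = cinner (u k \<theta>) (?a l)"
        using cinner_adjoint[of ?L "u k \<theta>" "u l \<theta>"]
        by (simp add: a lam_self_adjoint cinner.scaleR_left cinner.scaleR_right)
      then have "cinner (u k \<theta>) (?a l) = 0"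
        using pderiv_cinner_orthogonal[OF that, of j \<theta>] by simp
      then show ?thesis
        by (metis cnj_cinner complex_cnj_zero)
    qed
    moreover have "Im (cinner (?a l) (u l \<theta>)) = 0"
      using cinner_adjoint[of ?L "u l \<theta>" "u l \<theta>"] cnj_cinner[of "?L *v u l \<theta>" "u l \<theta>"]
      by (simp add: a lam_self_adjoint cinner.scaleR_left complex_eq_iff)
    ultimately show "?a l \<in> span {u l \<theta>}"
      by (intro orthogonal_family_in_span[of "\<lambda>l. u l \<theta>"] u_orthogonal u_nonzero)
  qed
next
  assume "\<forall>l j \<theta>. pderiv_param (u l) j \<theta> \<in> span {u l \<theta>}"
  then show "\<forall>l j \<theta>. lam j \<theta> *v u l \<theta> = 2 *\<^sub>R pderiv_param (u l) j \<theta>"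
    by (intro allI sld_apply_eq_if_parallel[of "\<lambda>l. u l _"] u_orthogonal u_nonzero sld_equation) auto
qed

lemma parallel_iff_sgn_constant:
  "(\<forall>l j \<theta>. pderiv_param (u l) j \<theta> \<in> span {u l \<theta>}) \<longleftrightarrow> (\<forall>l. \<exists>v. \<forall>\<theta>. sgn (u l \<theta>) = v)"
proof -
  have "(\<forall>j \<theta>. pderiv_param (u l) j \<theta> \<in> span {u l \<theta>})
      \<longleftrightarrow> (\<forall>\<theta> h. frechet_derivative (u l) (at \<theta>) h \<in> span {u l \<theta>})" for l
    using linear_in_span_if_axis_in_span[OF has_derivative_linear[OF u_has_derivative]]
    by (auto simp: pderiv_param_def)
  moreover have "(\<exists>v. \<forall>\<theta>. sgn (u l \<theta>) = v)
      \<longleftrightarrow> (\<forall>\<theta> h. frechet_derivative (u l) (at \<theta>) h \<in> span {u l \<theta>})" for l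
    by (rule sgn_constant_iff_derivative_in_span) (rule u_has_derivative, rule u_nonzero)
  ultimately have "(\<forall>j \<theta>. pderiv_param (u l) j \<theta> \<in> span {u l \<theta>}) \<longleftrightarrow> (\<exists>v. \<forall>\<theta>. sgn (u l \<theta>) = v)" for l
    by simp
  then show ?thesis
    by blast
qed

theorem information_eq_iff_sgn_constant:
  "(\<forall>\<theta>. H_SLD lam (\<lambda>\<theta>. frame_operator (\<lambda>l. u l \<theta>)) \<theta>
          = (\<chi> j k. 4 * (\<Sum>l\<in>UNIV. pderiv_param (u l) j \<theta> \<bullet> pderiv_param (u l) k \<theta>)))
   \<longleftrightarrow> (\<forall>l. \<exists>v. \<forall>\<theta>. sgn (u l \<theta>) = v)"
  unfolding information_eq_iff_sld_apply_eq sld_apply_eq_iff_parallel parallel_iff_sgn_constant ..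

end

lemma kraus_apply_pure_state: "kraus_apply F (ketbra \<psi> \<psi>) = frame_operator (\<lambda>k. F k *v \<psi>)"
  by (simp add: kraus_apply_def frame_operator_def sandwich_ketbra)

lemma trace_sandwich_ketbra: "trace (A ** ketbra \<psi> \<psi> ** adjoint B) = cinner (A *v \<psi>) (B *v \<psi>)"
  by (simp add: sandwich_ketbra trace_ketbra)

lemma C_Ups_pure_state:
  assumes "\<And>l. Ups l differentiable (at \<theta>)"
  shows "C_Ups Ups (ketbra \<psi> \<psi>) \<theta> = (\<chi> j k. 4 * (\<Sum>l\<in>UNIV.
      pderiv_param (\<lambda>\<theta>. Ups l \<theta> *v \<psi>) j \<theta> \<bullet> pderiv_param (\<lambda>\<theta>. Ups l \<theta> *v \<psi>) k \<theta>))"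
  by (simp add: C_Ups_def trace_sandwich_ketbra Re_cinner assms
      pderiv_param_bounded_linear[OF matrix_vector_mult.bounded_linear_left])

theorem lemma9:
  fixes E :: "'k::finite \<Rightarrow> real^'m \<Rightarrow> complex^'d^'d"
    and Ups :: "'d \<Rightarrow> real^'m \<Rightarrow> complex^'d^'d"
    and p :: "'d \<Rightarrow> real^'m \<Rightarrow> real"
    and \<psi>0 :: "complex^'d"
    and lam :: "'m \<Rightarrow> real^'m \<Rightarrow> complex^'d^'d"
  assumes E_diff: "\<And>k \<theta>. E k differentiable (at \<theta>)"
    and E_trace_pres: "\<And>\<theta>. (\<Sum>k\<in>UNIV. adjoint (E k \<theta>) ** E k \<theta>) = mat 1"
    and Ups_diff: "\<And>k \<theta>. Ups k differentiable (at \<theta>)"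
    and Ups_same_channel: "\<And>\<theta> \<rho>. kraus_apply (\<lambda>k. Ups k \<theta>) \<rho> = kraus_apply (\<lambda>k. E k \<theta>) \<rho>"
    and psi0_unit: "norm \<psi>0 = 1"
    and Ups_canonical: "\<And>\<theta> j k. trace (Ups k \<theta> ** ketbra \<psi>0 \<psi>0 ** adjoint (Ups j \<theta>))
                                   = (if j = k then complex_of_real (p k \<theta>) else 0)"
    and p_pos: "\<And>j \<theta>. p j \<theta> > 0"
    and lam_sa: "\<And>j \<theta>. adjoint (lam j \<theta>) = lam j \<theta>"
    and lam_SLD: "\<And>j \<theta>. pderiv_param (\<lambda>\<theta>'. kraus_apply (\<lambda>k. E k \<theta>') (ketbra \<psi>0 \<psi>0)) j \<theta>
         = (1/2) *\<^sub>R (kraus_apply (\<lambda>k. E k \<theta>) (ketbra \<psi>0 \<psi>0) ** lam j \<theta>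
                      + lam j \<theta> ** kraus_apply (\<lambda>k. E k \<theta>) (ketbra \<psi>0 \<psi>0))"
  shows "(\<forall>\<theta>. H_SLD lam (\<lambda>\<theta>'. kraus_apply (\<lambda>k. E k \<theta>') (ketbra \<psi>0 \<psi>0)) \<theta>
                = C_Ups Ups (ketbra \<psi>0 \<psi>0) \<theta>)
         \<longleftrightarrow> (\<forall>k. \<exists>v. \<forall>\<theta>. (1 / sqrt (p k \<theta>)) *\<^sub>R (Ups k \<theta> *v \<psi>0) = v)"
proof -
  define u where "u l \<theta> = Ups l \<theta> *v \<psi>0" for l \<theta>
  have channel_output: "kraus_apply (\<lambda>k. E k \<theta>) (ketbra \<psi>0 \<psi>0) = frame_operator (\<lambda>l. u l \<theta>)" for \<theta>
    unfolding u_def by (simp flip: Ups_same_channel add: kraus_apply_pure_state)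
  have cinner_u: "cinner (u l \<theta>) (u k \<theta>) = (if l = k then of_real (p l \<theta>) else 0)" for l k \<theta>
    using Ups_canonical[where \<theta> = \<theta> and j = k and k = l]
    by (simp add: u_def trace_sandwich_ketbra eq_commute)
  have norm_u: "norm (u l \<theta>) = sqrt (p l \<theta>)" for l \<theta>
    using cinner_u[of l \<theta> l] norm_ge_zero real_sqrt_unique
    by (metis cinner_self of_real_eq_iff)
  interpret canonical_output u lam
  proof
    show "u l differentiable (at \<theta>)" for l \<theta>
      using Ups_diff[of l] unfolding u_def differentiable_def
      by (blast intro: bounded_linear.has_derivative[OF matrix_vector_mult.bounded_linear_left])
    show "u l \<theta> \<noteq> 0" for l \<theta>
      using p_pos[of l \<theta>] norm_u[of l \<theta>] by auto
  qed (use cinner_u lam_sa lam_SLD channel_output in simp_all)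
  have "sgn (u l \<theta>) = (1 / sqrt (p l \<theta>)) *\<^sub>R (Ups l \<theta> *v \<psi>0)" for l \<theta>
    using norm_u[of l \<theta>] by (simp add: sgn_div_norm u_def divide_inverse_commute)
  then show ?thesis
    using information_eq_iff_sgn_constant
    by (simp add: channel_output C_Ups_pure_state[OF Ups_diff] u_def[abs_def])
qed

end
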